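(* (i) Let $(b_{ij})_{1\le i,j\le 3}$ be the canonical generators of $C(B_3^+)$. Then the linear span of $\{b_{mn}b_{st}: m,n,s,t\in\{1,2,3\}\}$ (the entries of $u_{B_3^+}^{\otimes2}=\sum_{m,n,s,t}b_{mn}b_{st}\otimes E_{mn}\otimes E_{st}$) has dimension $14$. (ii) Let $(o_{ij})_{1\le i,j\le 2}$ be the canonical generators of $C(O_2^+)$. Then the linear span of $\{o_{mn}o_{st}: m,n,s,t\in\{1,2\}\}$ (the entries of $u_{O_2^+}^{\otimes2}$) has dimension $10$.
   Context: $C(O_N^+)$ (free orthogonal quantum group) is the universal unital $C^*$-algebra generated by self-adjoint elements $o_{ij}$, $1\le i,j\le N$, such that the matrix $(o_{ij})$ is orthogonal, i.e. $\sum_k o_{ik}o_{jk}=\sum_k o_{ki}o_{kj}=\delta_{ij}\mathbb 1$. $C(B_N^+)$ (free bistochastic quantum group) is the universal unital $C^*$-algebra generated by self-adjoint $b_{ij}$, $1\le i,j\le N$, such that $(b_{ij})$ is orthogonal and every row and every column sums to $\mathbb 1$: $\sum_k b_{ik}=\sum_k b_{ki}=\mathbb 1$ for all $i$. (Equivalently these are the easy quantum groups of all non-crossing partitions with blocks of size $2$, resp. of size $1$ or $2$.) $E_{mn}$ denote matrix units. *)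

theory Defs
  imports Complex_Main "HOL-Library.Poly_Mapping" "HOL-Library.Numeral_Type"
begin

datatype 'g word = Word "'g list"

instantiation word :: (type) monoid_add
begin
definition zero_word :: "'g word" where "zero_word = Word []"
fun plus_word :: "'g word \<Rightarrow> 'g word \<Rightarrow> 'g word" where
  "plus_word (Word u) (Word v) = Word (u @ v)"
instance
proof
  fix a b c :: "'g word"
  show "a + b + c = a + (b + c)" by (cases a; cases b; cases c) simp
  show "0 + a = a" by (cases a) (simp add: zero_word_def)
  show "a + 0 = a" by (cases a) (simp add: zero_word_def)
qed
end

text \<open>The free algebra \<open>\<complex>\<langle>g\<rangle>\<close>: finitely supported complex functions on words,
  with convolution product (a unital ring, by the Poly_Mapping library).\<close>
type_synonym 'g fpoly = "'g word \<Rightarrow>\<^sub>0 complex"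

definition fscale :: "complex \<Rightarrow> 'g fpoly \<Rightarrow> 'g fpoly" where
  "fscale c p = Poly_Mapping.single 0 c * p"

definition gen :: "'g \<Rightarrow> 'g fpoly" where
  "gen g = Poly_Mapping.single (Word [g]) 1"

inductive_set ideal_gen :: "'g fpoly set \<Rightarrow> 'g fpoly set" for R where
  base: "r \<in> R \<Longrightarrow> r \<in> ideal_gen R"
| zero: "0 \<in> ideal_gen R"
| add: "p \<in> ideal_gen R \<Longrightarrow> q \<in> ideal_gen R \<Longrightarrow> p + q \<in> ideal_gen R"
| mult: "p \<in> ideal_gen R \<Longrightarrow> a * p * b \<in> ideal_gen R"

lemma ideal_gen_scale: "p \<in> ideal_gen R \<Longrightarrow> fscale c p \<in> ideal_gen R"
  using ideal_gen.mult[of p R "Poly_Mapping.single 0 c" 1] by (simp add: fscale_def)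

lemma ideal_gen_uminus: "p \<in> ideal_gen R \<Longrightarrow> - p \<in> ideal_gen R"
  using ideal_gen.mult[of p R "- 1" 1] by simp

lemma ideal_gen_diff: "p \<in> ideal_gen R \<Longrightarrow> q \<in> ideal_gen R \<Longrightarrow> p - q \<in> ideal_gen R"
  using ideal_gen.add[OF _ ideal_gen_uminus, of p R q] by simp

lemma ideal_gen_left: "p \<in> ideal_gen R \<Longrightarrow> a * p \<in> ideal_gen R"
  using ideal_gen.mult[of p R a 1] by simp

lemma ideal_gen_right: "p \<in> ideal_gen R \<Longrightarrow> p * b \<in> ideal_gen R"
  using ideal_gen.mult[of p R 1 b] by simp

text \<open>Generators are indexed by pairs \<open>(i,j)\<close> of elements of an index type \<open>'n\<close>, meant to be finite
  with \<open>N = CARD('n)\<close> elements.\<close>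
definition O_rels :: "('n \<times> 'n) fpoly set" where
  "O_rels =
     {(\<Sum>k\<in>UNIV. gen (i,k) * gen (j,k)) - (if i = j then 1 else 0) | i j. True} \<union>
     {(\<Sum>k\<in>UNIV. gen (k,i) * gen (k,j)) - (if i = j then 1 else 0) | i j. True}"

definition B_rels :: "('n \<times> 'n) fpoly set" where
  "B_rels = O_rels \<union>
     {(\<Sum>k\<in>UNIV. gen (i,k)) - 1 | i. True} \<union>
     {(\<Sum>k\<in>UNIV. gen (k,i)) - 1 | i. True}"

definition O_equiv :: "('n \<times> 'n) fpoly \<Rightarrow> ('n \<times> 'n) fpoly \<Rightarrow> bool" where
  "O_equiv p q \<longleftrightarrow> p - q \<in> ideal_gen O_rels"

definition B_equiv :: "('n \<times> 'n) fpoly \<Rightarrow> ('n \<times> 'n) fpoly \<Rightarrow> bool" where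
  "B_equiv p q \<longleftrightarrow> p - q \<in> ideal_gen B_rels"

lemma equivp_ideal_rel:
  fixes R :: "'g fpoly set"
  shows "equivp (\<lambda>p q. p - q \<in> ideal_gen R)"
proof (rule equivpI)
  show "reflp (\<lambda>p q. p - q \<in> ideal_gen R)" by (rule reflpI) (simp add: ideal_gen.zero)
  show "symp (\<lambda>p q. p - q \<in> ideal_gen R)"
  proof (rule sympI)
    fix x y :: "'g fpoly"
    assume "x - y \<in> ideal_gen R"
    hence "- (x - y) \<in> ideal_gen R" by (rule ideal_gen_uminus)
    thus "y - x \<in> ideal_gen R" by simp
  qed
  show "transp (\<lambda>p q. p - q \<in> ideal_gen R)"
  proof (rule transpI)
    fix x y z :: "'g fpoly"
    assume "x - y \<in> ideal_gen R" "y - z \<in> ideal_gen R"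
    hence "(x - y) + (y - z) \<in> ideal_gen R" by (rule ideal_gen.add)
    thus "x - z \<in> ideal_gen R" by simp
  qed
qed

quotient_type ('n) pol_O = "('n \<times> 'n) fpoly" / O_equiv
  unfolding O_equiv_def[abs_def] by (rule equivp_ideal_rel)

quotient_type ('n) pol_B = "('n \<times> 'n) fpoly" / B_equiv
  unfolding B_equiv_def[abs_def] by (rule equivp_ideal_rel)

lemma ideal_rel_mult:
  assumes "p - p' \<in> ideal_gen R" "q - q' \<in> ideal_gen R"
  shows "p * q - p' * q' \<in> ideal_gen R"
proof -
  have eq: "p * q - p' * q' = (p - p') * q + p' * (q - q')" by (simp add: algebra_simps)
  show ?thesis unfolding eq
    by (rule ideal_gen.add[OF ideal_gen_right[OF assms(1)] ideal_gen_left[OF assms(2)]])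
qed

lemma ideal_rel_add:
  assumes "p - p' \<in> ideal_gen R" "q - q' \<in> ideal_gen R"
  shows "(p + q) - (p' + q') \<in> ideal_gen R"
proof -
  have eq: "(p + q) - (p' + q') = (p - p') + (q - q')" by (simp add: algebra_simps)
  show ?thesis unfolding eq by (rule ideal_gen.add[OF assms])
qed

lemma ideal_rel_minus:
  assumes "p - p' \<in> ideal_gen R" "q - q' \<in> ideal_gen R"
  shows "(p - q) - (p' - q') \<in> ideal_gen R"
proof -
  have eq: "(p - q) - (p' - q') = (p - p') - (q - q')" by (simp add: algebra_simps)
  show ?thesis unfolding eq by (rule ideal_gen_diff[OF assms])
qed

lemma ideal_rel_uminus:
  assumes "p - p' \<in> ideal_gen R" shows "(- p) - (- p') \<in> ideal_gen R"
  using ideal_gen_uminus[OF assms] by (simp add: algebra_simps)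

lemma ideal_rel_scale:
  assumes "p - p' \<in> ideal_gen R" shows "fscale c p - fscale c p' \<in> ideal_gen R"
  using ideal_gen_left[OF assms, of "Poly_Mapping.single 0 c"]
  by (simp add: fscale_def algebra_simps)

lemma ideal_rel_refl: "p - p \<in> ideal_gen R" by (simp add: ideal_gen.zero)

lemma O_equiv_eqI: "p = q \<Longrightarrow> O_equiv p q"
  by (simp add: O_equiv_def ideal_gen.zero)

instantiation pol_O :: (type) "{ring, monoid_mult}"
begin
lift_definition zero_pol_O :: "'n pol_O" is 0 .
lift_definition one_pol_O :: "'n pol_O" is 1 .
lift_definition plus_pol_O :: "'n pol_O \<Rightarrow> 'n pol_O \<Rightarrow> 'n pol_O" is "(+)"
  unfolding O_equiv_def by (rule ideal_rel_add)
lift_definition minus_pol_O :: "'n pol_O \<Rightarrow> 'n pol_O \<Rightarrow> 'n pol_O" is "(-)"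
  unfolding O_equiv_def by (rule ideal_rel_minus)
lift_definition uminus_pol_O :: "'n pol_O \<Rightarrow> 'n pol_O" is uminus
  unfolding O_equiv_def by (rule ideal_rel_uminus)
lift_definition times_pol_O :: "'n pol_O \<Rightarrow> 'n pol_O \<Rightarrow> 'n pol_O" is "(*)"
  unfolding O_equiv_def by (rule ideal_rel_mult)
instance
  by standard (transfer, rule O_equiv_eqI, simp add: algebra_simps)+
end

lemma B_equiv_eqI: "p = q \<Longrightarrow> B_equiv p q"
  by (simp add: B_equiv_def ideal_gen.zero)

instantiation pol_B :: (type) "{ring, monoid_mult}"
begin
lift_definition zero_pol_B :: "'n pol_B" is 0 .
lift_definition one_pol_B :: "'n pol_B" is 1 .
lift_definition plus_pol_B :: "'n pol_B \<Rightarrow> 'n pol_B \<Rightarrow> 'n pol_B" is "(+)"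
  unfolding B_equiv_def by (rule ideal_rel_add)
lift_definition minus_pol_B :: "'n pol_B \<Rightarrow> 'n pol_B \<Rightarrow> 'n pol_B" is "(-)"
  unfolding B_equiv_def by (rule ideal_rel_minus)
lift_definition uminus_pol_B :: "'n pol_B \<Rightarrow> 'n pol_B" is uminus
  unfolding B_equiv_def by (rule ideal_rel_uminus)
lift_definition times_pol_B :: "'n pol_B \<Rightarrow> 'n pol_B \<Rightarrow> 'n pol_B" is "(*)"
  unfolding B_equiv_def by (rule ideal_rel_mult)
instance
  by standard (transfer, rule B_equiv_eqI, simp add: algebra_simps)+
end

lift_definition scale_O :: "complex \<Rightarrow> 'n pol_O \<Rightarrow> 'n pol_O" is fscale
  unfolding O_equiv_def by (rule ideal_rel_scale)

lift_definition scale_B :: "complex \<Rightarrow> 'n pol_B \<Rightarrow> 'n pol_B" is fscale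
  unfolding B_equiv_def by (rule ideal_rel_scale)


lemma fscale_vector_space: "Vector_Spaces.vector_space (fscale :: complex \<Rightarrow> 'g fpoly \<Rightarrow> 'g fpoly)"
  by unfold_locales
    (simp_all add: fscale_def distrib_left distrib_right single_add mult_single
       mult.assoc[symmetric] flip: one_poly_mapping.abs_eq)

lemma scale_O_vector_space: "Vector_Spaces.vector_space (scale_O :: complex \<Rightarrow> 'n pol_O \<Rightarrow> 'n pol_O)"
  by unfold_locales (transfer, rule O_equiv_eqI,
      simp add: fscale_def distrib_left distrib_right single_add mult_single
       mult.assoc[symmetric] flip: one_poly_mapping.abs_eq)+

lemma scale_B_vector_space: "Vector_Spaces.vector_space (scale_B :: complex \<Rightarrow> 'n pol_B \<Rightarrow> 'n pol_B)"
  by unfold_locales (transfer, rule B_equiv_eqI,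
      simp add: fscale_def distrib_left distrib_right single_add mult_single
       mult.assoc[symmetric] flip: one_poly_mapping.abs_eq)+

lift_definition o_gen :: "'n \<Rightarrow> 'n \<Rightarrow> 'n pol_O" is "\<lambda>i j. gen (i,j)" .
lift_definition b_gen :: "'n \<Rightarrow> 'n \<Rightarrow> 'n pol_B" is "\<lambda>i j. gen (i,j)" .

end

theory Submission
  imports Defs "HOL-Analysis.Cartesian_Space"
begin

text \<open>Each dimension is computed by exhibiting an explicit family of monomials of degree at most
  two that spans the same space as the quadratic monomials and is linearly independent.

  Spanning: for \<open>O\<^sub>2\<^sup>+\<close> the orthogonality relations give \<open>o\<^sub>2\<^sub>2\<^sup>2 = o\<^sub>1\<^sub>1\<^sup>2\<close>,
  \<open>o\<^sub>2\<^sub>1\<^sup>2 = o\<^sub>1\<^sub>2\<^sup>2\<close>, \<open>o\<^sub>1\<^sub>2 o\<^sub>2\<^sub>2 = - o\<^sub>1\<^sub>1 o\<^sub>2\<^sub>1\<close> and three similar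
  identities, which leaves 10 monomials. For \<open>B\<^sub>3\<^sup>+\<close> the row and column sums express
  the third row and column affinely in \<open>x = b\<^sub>1\<^sub>1, y = b\<^sub>1\<^sub>2, z = b\<^sub>2\<^sub>1, w = b\<^sub>2\<^sub>2\<close>, so
  all products lie in the span of \<open>1, x, y, z, w\<close> and their 16 products, and the orthogonality
  relations express twice each of \<open>xx, xy, xz, yx, yy, zx, zz\<close> through the remaining 14 elements.

  Independence: a linear relation in the universal algebra survives every representation of
  the defining relations. Evaluating it in a handful of representations by \<open>2 \<times> 2\<close> matrices
  yields a linear system on the coefficients whose only solution is zero.\<close>

lemma poly_mapping_eq_sum_single:
  "p = (\<Sum>w\<in>Poly_Mapping.keys p. Poly_Mapping.single w (Poly_Mapping.lookup p w))"
  by (rule poly_mapping_eqI) (simp add: lookup_sum lookup_single when_def in_keys_iff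
       sum.delta' [unfolded when_def] cong: if_cong)

lemma single_0_mult_commute:
  "Poly_Mapping.single 0 c * p = p * Poly_Mapping.single 0 (c::complex)"
proof -
  let ?P = "Poly_Mapping.keys p"
  have "Poly_Mapping.single 0 c * p =
      (\<Sum>w\<in>?P. Poly_Mapping.single 0 c * Poly_Mapping.single w (Poly_Mapping.lookup p w))"
    by (subst poly_mapping_eq_sum_single[of p]) (simp add: sum_distrib_left)
  also have "\<dots> = (\<Sum>w\<in>?P. Poly_Mapping.single w (Poly_Mapping.lookup p w) * Poly_Mapping.single 0 c)"
    by (simp add: mult_single mult.commute)
  also have "\<dots> = p * Poly_Mapping.single 0 c"
    by (subst (2) poly_mapping_eq_sum_single[of p]) (simp add: sum_distrib_right)
  finally show ?thesis .
qed

definition monomial :: "'g list \<Rightarrow> 'g fpoly" where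
  "monomial ws = Poly_Mapping.single (Word ws) 1"

lemma monomial_Nil: "monomial [] = 1"
  by (simp add: monomial_def flip: zero_word_def)

lemma monomial_Cons: "monomial (w # ws) = gen w * monomial ws"
  by (simp add: monomial_def gen_def mult_single)

fun eval_word :: "('g \<Rightarrow> 'a::monoid_mult) \<Rightarrow> 'g word \<Rightarrow> 'a" where
  "eval_word g (Word ws) = prod_list (map g ws)"

lemma eval_word_plus: "eval_word g (u + v) = eval_word g u * eval_word g v"
  by (cases u; cases v) simp

lemma eval_word_0 [simp]: "eval_word g 0 = 1"
  by (simp add: zero_word_def)

lemma additive_abs_pol_O: "additive abs_pol_O"
  by (simp add: additive_def plus_pol_O.abs_eq)

lemma additive_abs_pol_B: "additive abs_pol_B"
  by (simp add: additive_def plus_pol_B.abs_eq)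

lemma abs_pol_O_eq_0_iff: "abs_pol_O p = 0 \<longleftrightarrow> p \<in> ideal_gen O_rels"
  by (simp add: zero_pol_O.abs_eq pol_O.abs_eq_iff O_equiv_def)

lemma abs_pol_B_eq_0_iff: "abs_pol_B p = 0 \<longleftrightarrow> p \<in> ideal_gen B_rels"
  by (simp add: zero_pol_B.abs_eq pol_B.abs_eq_iff B_equiv_def)

lemma sum_scale_O_abs_pol_O:
  "(\<Sum>i\<in>I. scale_O (c i) (abs_pol_O (P i))) = abs_pol_O (\<Sum>i\<in>I. fscale (c i) (P i))"
  by (simp add: scale_O.abs_eq additive.sum[OF additive_abs_pol_O])

lemma sum_scale_B_abs_pol_B:
  "(\<Sum>i\<in>I. scale_B (c i) (abs_pol_B (P i))) = abs_pol_B (\<Sum>i\<in>I. fscale (c i) (P i))"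
  by (simp add: scale_B.abs_eq additive.sum[OF additive_abs_pol_B])

lemma abs_pol_O_monomial: "abs_pol_O (monomial ws) = prod_list (map (\<lambda>(i, j). o_gen i j) ws)"
  by (induction ws)
    (simp_all add: monomial_Nil monomial_Cons o_gen.abs_eq case_prod_beta
      flip: times_pol_O.abs_eq one_pol_O.abs_eq)

lemma abs_pol_B_monomial: "abs_pol_B (monomial ws) = prod_list (map (\<lambda>(i, j). b_gen i j) ws)"
  by (induction ws)
    (simp_all add: monomial_Nil monomial_Cons b_gen.abs_eq case_prod_beta
      flip: times_pol_B.abs_eq one_pol_B.abs_eq)

lemma abs_pol_O_eq_if_O_rel: "p - q \<in> O_rels \<Longrightarrow> abs_pol_O p = abs_pol_O q"
  by (simp add: pol_O.abs_eq_iff O_equiv_def ideal_gen.base)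

lemma abs_pol_B_eq_if_B_rel: "p - q \<in> B_rels \<Longrightarrow> abs_pol_B p = abs_pol_B q"
  by (simp add: pol_B.abs_eq_iff B_equiv_def ideal_gen.base)

lemma o_gen_orthogonal:
  shows "(\<Sum>k\<in>UNIV. o_gen i k * o_gen j k) = (if i = j then 1 else 0)"
    and "(\<Sum>k\<in>UNIV. o_gen k i * o_gen k j) = (if i = j then 1 else 0)"
proof -
  have "(\<Sum>k\<in>UNIV. o_gen i k * o_gen j k) = abs_pol_O (\<Sum>k\<in>UNIV. gen (i, k) * gen (j, k))"
    by (simp add: o_gen.abs_eq times_pol_O.abs_eq additive.sum[OF additive_abs_pol_O])
  also have "\<dots> = abs_pol_O (if i = j then 1 else 0)"
    by (rule abs_pol_O_eq_if_O_rel) (auto simp: O_rels_def)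
  finally show "(\<Sum>k\<in>UNIV. o_gen i k * o_gen j k) = (if i = j then 1 else 0)"
    by (simp add: one_pol_O.abs_eq zero_pol_O.abs_eq)
  have "(\<Sum>k\<in>UNIV. o_gen k i * o_gen k j) = abs_pol_O (\<Sum>k\<in>UNIV. gen (k, i) * gen (k, j))"
    by (simp add: o_gen.abs_eq times_pol_O.abs_eq additive.sum[OF additive_abs_pol_O])
  also have "\<dots> = abs_pol_O (if i = j then 1 else 0)"
    by (rule abs_pol_O_eq_if_O_rel) (auto simp: O_rels_def)
  finally show "(\<Sum>k\<in>UNIV. o_gen k i * o_gen k j) = (if i = j then 1 else 0)"
    by (simp add: one_pol_O.abs_eq zero_pol_O.abs_eq)
qed

lemma b_gen_orthogonal:
  shows "(\<Sum>k\<in>UNIV. b_gen i k * b_gen j k) = (if i = j then 1 else 0)"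
    and "(\<Sum>k\<in>UNIV. b_gen k i * b_gen k j) = (if i = j then 1 else 0)"
proof -
  have "(\<Sum>k\<in>UNIV. b_gen i k * b_gen j k) = abs_pol_B (\<Sum>k\<in>UNIV. gen (i, k) * gen (j, k))"
    by (simp add: b_gen.abs_eq times_pol_B.abs_eq additive.sum[OF additive_abs_pol_B])
  also have "\<dots> = abs_pol_B (if i = j then 1 else 0)"
    by (rule abs_pol_B_eq_if_B_rel) (auto simp: B_rels_def O_rels_def)
  finally show "(\<Sum>k\<in>UNIV. b_gen i k * b_gen j k) = (if i = j then 1 else 0)"
    by (simp add: one_pol_B.abs_eq zero_pol_B.abs_eq)
  have "(\<Sum>k\<in>UNIV. b_gen k i * b_gen k j) = abs_pol_B (\<Sum>k\<in>UNIV. gen (k, i) * gen (k, j))"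
    by (simp add: b_gen.abs_eq times_pol_B.abs_eq additive.sum[OF additive_abs_pol_B])
  also have "\<dots> = abs_pol_B (if i = j then 1 else 0)"
    by (rule abs_pol_B_eq_if_B_rel) (auto simp: B_rels_def O_rels_def)
  finally show "(\<Sum>k\<in>UNIV. b_gen k i * b_gen k j) = (if i = j then 1 else 0)"
    by (simp add: one_pol_B.abs_eq zero_pol_B.abs_eq)
qed

lemma b_gen_stochastic:
  shows "(\<Sum>k\<in>UNIV. b_gen i k) = 1"
    and "(\<Sum>k\<in>UNIV. b_gen k i) = 1"
proof -
  have "(\<Sum>k\<in>UNIV. b_gen i k) = abs_pol_B (\<Sum>k\<in>UNIV. gen (i, k))"
    by (simp add: b_gen.abs_eq additive.sum[OF additive_abs_pol_B])
  also have "\<dots> = abs_pol_B 1"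
    by (rule abs_pol_B_eq_if_B_rel) (auto simp: B_rels_def)
  finally show "(\<Sum>k\<in>UNIV. b_gen i k) = 1"
    by (simp add: one_pol_B.abs_eq)
  have "(\<Sum>k\<in>UNIV. b_gen k i) = abs_pol_B (\<Sum>k\<in>UNIV. gen (k, i))"
    by (simp add: b_gen.abs_eq additive.sum[OF additive_abs_pol_B])
  also have "\<dots> = abs_pol_B 1"
    by (rule abs_pol_B_eq_if_B_rel) (auto simp: B_rels_def)
  finally show "(\<Sum>k\<in>UNIV. b_gen k i) = 1"
    by (simp add: one_pol_B.abs_eq)
qed

interpretation O_space: vector_space "scale_O :: complex \<Rightarrow> 'n pol_O \<Rightarrow> 'n pol_O"
  by (rule scale_O_vector_space)

interpretation B_space: vector_space "scale_B :: complex \<Rightarrow> 'n pol_B \<Rightarrow> 'n pol_B"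
  by (rule scale_B_vector_space)

section \<open>Evaluation in complex algebras\<close>

lemma ball_setcompr: "(\<forall>z\<in>{f x | x. True}. P z) \<longleftrightarrow> (\<forall>x. P (f x))"
  by blast

lemma ball_setcompr2: "(\<forall>z\<in>{f x y | x y. True}. P z) \<longleftrightarrow> (\<forall>x y. P (f x y))"
  by blast

locale complex_algebra =
  fixes of_complex :: "complex \<Rightarrow> 'a::ring_1"
  assumes of_complex_add: "of_complex (a + b) = of_complex a + of_complex b"
    and of_complex_mult: "of_complex (a * b) = of_complex a * of_complex b"
    and of_complex_1 [simp]: "of_complex 1 = 1"
    and of_complex_commute: "of_complex a * x = x * of_complex a"
begin

lemma of_complex_0 [simp]: "of_complex 0 = 0"
  using of_complex_add[of 0 0] by simp

lemma of_complex_mult_mult: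
  "(of_complex a * x) * (of_complex b * y) = of_complex (a * b) * (x * y)"
  by (metis mult.assoc of_complex_commute of_complex_mult)

definition eval :: "('g \<Rightarrow> 'a) \<Rightarrow> 'g fpoly \<Rightarrow> 'a" where
  "eval g p = (\<Sum>w\<in>Poly_Mapping.keys p. of_complex (Poly_Mapping.lookup p w) * eval_word g w)"

lemma additive_eval: "additive (eval g)"
  unfolding additive_def eval_def
  by (intro allI setsum_keys_plus_distrib) (simp_all add: of_complex_add distrib_right)

lemmas eval_add = additive.add[OF additive_eval]
  and eval_0 [simp] = additive.zero[OF additive_eval]
  and eval_diff = additive.diff[OF additive_eval]
  and eval_sum = additive.sum[OF additive_eval]

lemma eval_single: "eval g (Poly_Mapping.single w c) = of_complex c * eval_word g w"
  by (cases "c = 0") (simp_all add: eval_def)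

lemma eval_mult: "eval g (p * q) = eval g p * eval g q"
proof -
  let ?P = "Poly_Mapping.keys p" and ?Q = "Poly_Mapping.keys q"
  have "p * q = (\<Sum>w\<in>?P. Poly_Mapping.single w (Poly_Mapping.lookup p w)) *
                (\<Sum>v\<in>?Q. Poly_Mapping.single v (Poly_Mapping.lookup q v))"
    by (subst poly_mapping_eq_sum_single[of p], subst poly_mapping_eq_sum_single[of q]) (rule refl)
  also have "\<dots> = (\<Sum>w\<in>?P. \<Sum>v\<in>?Q.
      Poly_Mapping.single (w + v) (Poly_Mapping.lookup p w * Poly_Mapping.lookup q v))"
    by (simp add: sum_distrib_left sum_distrib_right mult_single sum.swap[of _ ?Q])
  finally have "eval g (p * q) = (\<Sum>w\<in>?P. \<Sum>v\<in>?Q.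
      (of_complex (Poly_Mapping.lookup p w) * eval_word g w) *
      (of_complex (Poly_Mapping.lookup q v) * eval_word g v))"
    by (simp add: eval_sum eval_single eval_word_plus of_complex_mult_mult)
  also have "\<dots> = eval g p * eval g q"
    by (simp add: eval_def sum_product)
  finally show ?thesis .
qed

lemma eval_1 [simp]: "eval g 1 = 1"
  using eval_single[of g 0 1] by simp

lemma eval_gen [simp]: "eval g (gen x) = g x"
  by (simp add: gen_def eval_single)

lemma eval_monomial [simp]: "eval g (monomial ws) = prod_list (map g ws)"
  by (simp add: monomial_def eval_single)

lemma eval_fscale: "eval g (fscale c p) = of_complex c * eval g p"
  by (simp add: fscale_def eval_mult eval_single)

lemma eval_ideal_gen_eq_0:
  assumes "\<And>r. r \<in> R \<Longrightarrow> eval g r = 0" and "p \<in> ideal_gen R"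
  shows "eval g p = 0"
  using assms(2) by induction (simp_all add: assms(1) eval_add eval_mult)

definition O_rep :: "('n \<times> 'n \<Rightarrow> 'a) \<Rightarrow> bool" where
  "O_rep g \<longleftrightarrow> (\<forall>r\<in>O_rels. eval g r = 0)"

definition B_rep :: "('n \<times> 'n \<Rightarrow> 'a) \<Rightarrow> bool" where
  "B_rep g \<longleftrightarrow> (\<forall>r\<in>B_rels. eval g r = 0)"

lemma O_rep_iff:
  "O_rep g \<longleftrightarrow> (\<forall>i j. (\<Sum>k\<in>UNIV. g (i, k) * g (j, k)) = (if i = j then 1 else 0) \<and>
                      (\<Sum>k\<in>UNIV. g (k, i) * g (k, j)) = (if i = j then 1 else 0))"
  unfolding O_rep_def O_rels_def ball_Un ball_setcompr2
  by (simp add: eval_diff eval_sum eval_mult right_minus_eq all_conj_distrib if_distrib[of "eval g"])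

lemma B_rep_iff:
  "B_rep g \<longleftrightarrow> O_rep g \<and> (\<forall>i. (\<Sum>k\<in>UNIV. g (i, k)) = 1 \<and> (\<Sum>k\<in>UNIV. g (k, i)) = 1)"
  unfolding B_rep_def O_rep_def B_rels_def ball_Un ball_setcompr
  by (simp add: eval_diff eval_sum right_minus_eq all_conj_distrib)

lemma O_rep_linear_relation:
  assumes "O_rep g" and "(\<Sum>i\<in>I. scale_O (c i) (abs_pol_O (P i))) = 0"
  shows "(\<Sum>i\<in>I. of_complex (c i) * eval g (P i)) = 0"
proof -
  have "(\<Sum>i\<in>I. fscale (c i) (P i)) \<in> ideal_gen O_rels"
    using assms(2) by (simp add: sum_scale_O_abs_pol_O abs_pol_O_eq_0_iff)
  then have "eval g (\<Sum>i\<in>I. fscale (c i) (P i)) = 0"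
    using assms(1) unfolding O_rep_def by (blast intro: eval_ideal_gen_eq_0)
  then show ?thesis
    by (simp add: eval_sum eval_fscale)
qed

lemma B_rep_linear_relation:
  assumes "B_rep g" and "(\<Sum>i\<in>I. scale_B (c i) (abs_pol_B (P i))) = 0"
  shows "(\<Sum>i\<in>I. of_complex (c i) * eval g (P i)) = 0"
proof -
  have "(\<Sum>i\<in>I. fscale (c i) (P i)) \<in> ideal_gen B_rels"
    using assms(2) by (simp add: sum_scale_B_abs_pol_B abs_pol_B_eq_0_iff)
  then have "eval g (\<Sum>i\<in>I. fscale (c i) (P i)) = 0"
    using assms(1) unfolding B_rep_def by (blast intro: eval_ideal_gen_eq_0)
  then show ?thesis
    by (simp add: eval_sum eval_fscale)
qed

text \<open>This satisfies the orthogonality relations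
  when \<open>(p, r)\<close> and \<open>(q, s)\<close> are orthonormal bases of \<open>\<complex>\<^sup>2\<close> and \<open>A\<^sup>2 = D\<^sup>2 = 1\<close>; the
  bistochastic variant adds \<open>J/N \<otimes> 1\<close> and is used with \<open>p, q, r, s\<close> orthogonal to the
  constant vector.\<close>
definition rank_two_rep ::
  "('n \<Rightarrow> complex) \<Rightarrow> ('n \<Rightarrow> complex) \<Rightarrow> ('n \<Rightarrow> complex) \<Rightarrow> ('n \<Rightarrow> complex) \<Rightarrow> 'a \<Rightarrow> 'a \<Rightarrow> 'n \<times> 'n \<Rightarrow> 'a"
  where "rank_two_rep p q r s A D = (\<lambda>(i, j). of_complex (p i * q j) * A + of_complex (r i * s j) * D)"

definition bistochastic_rank_two_rep ::
  "('n::finite \<Rightarrow> complex) \<Rightarrow> ('n \<Rightarrow> complex) \<Rightarrow> ('n \<Rightarrow> complex) \<Rightarrow> ('n \<Rightarrow> complex) \<Rightarrow> 'a \<Rightarrow> 'a \<Rightarrow> 'n \<times> 'n \<Rightarrow> 'a"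
  where "bistochastic_rank_two_rep p q r s A D =
    (\<lambda>ij. of_complex (1 / of_nat CARD('n)) + rank_two_rep p q r s A D ij)"

end

section \<open>Representations by \<open>2 \<times> 2\<close> matrices\<close>

datatype mat2 = M2 complex complex complex complex

instantiation mat2 :: ring_1
begin
definition "zero_mat2 = M2 0 0 0 0"
definition "one_mat2 = M2 1 0 0 1"
fun plus_mat2 where "plus_mat2 (M2 a b c d) (M2 e f g h) = M2 (a + e) (b + f) (c + g) (d + h)"
fun minus_mat2 where "minus_mat2 (M2 a b c d) (M2 e f g h) = M2 (a - e) (b - f) (c - g) (d - h)"
fun uminus_mat2 where "uminus_mat2 (M2 a b c d) = M2 (- a) (- b) (- c) (- d)"
fun times_mat2 where
  "times_mat2 (M2 a b c d) (M2 e f g h) = M2 (a * e + b * g) (a * f + b * h) (c * e + d * g) (c * f + d * h)"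
instance
proof
  fix x y z :: mat2
  show "x + y + z = x + (y + z)" by (cases x; cases y; cases z) (simp add: algebra_simps)
  show "x + y = y + x" by (cases x; cases y) (simp add: algebra_simps)
  show "0 + x = x" by (cases x) (simp add: zero_mat2_def)
  show "- x + x = 0" by (cases x) (simp add: zero_mat2_def)
  show "x - y = x + - y" by (cases x; cases y) simp
  show "x * y * z = x * (y * z)" by (cases x; cases y; cases z) (simp add: algebra_simps)
  show "1 * x = x" by (cases x) (simp add: one_mat2_def)
  show "x * 1 = x" by (cases x) (simp add: one_mat2_def)
  show "(x + y) * z = x * z + y * z" by (cases x; cases y; cases z) (simp add: algebra_simps)
  show "x * (y + z) = x * y + x * z" by (cases x; cases y; cases z) (simp add: algebra_simps)
  show "(0::mat2) \<noteq> 1" by (simp add: zero_mat2_def one_mat2_def)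
qed
end

definition scalar_mat2 :: "complex \<Rightarrow> mat2" where
  "scalar_mat2 c = M2 c 0 0 c"

interpretation mat2: complex_algebra scalar_mat2
proof
  fix a b :: complex and x :: mat2
  show "scalar_mat2 (a + b) = scalar_mat2 a + scalar_mat2 b"
    and "scalar_mat2 (a * b) = scalar_mat2 a * scalar_mat2 b"
    and "scalar_mat2 1 = 1"
    by (simp_all add: scalar_mat2_def one_mat2_def)
  show "scalar_mat2 a * x = x * scalar_mat2 a"
    by (cases x) (simp add: scalar_mat2_def algebra_simps)
qed

definition "pauli_x = M2 0 1 1 0"
definition "pauli_z = M2 1 0 0 (-1)"
definition "upper_involution = M2 1 1 0 (-1)"
definition "lower_involution = M2 1 0 1 (-1)"

definition vec2 :: "complex \<Rightarrow> complex \<Rightarrow> 2 \<Rightarrow> complex" where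
  "vec2 a b i = (if i = 1 then a else b)"

definition vec3 :: "complex \<Rightarrow> complex \<Rightarrow> complex \<Rightarrow> 3 \<Rightarrow> complex" where
  "vec3 a b c i = (if i = 1 then a else if i = 2 then b else c)"

lemmas mat2_test_eval_simps = mat2.rank_two_rep_def mat2.bistochastic_rank_two_rep_def vec2_def vec3_def
  pauli_x_def pauli_z_def upper_involution_def lower_involution_def
  scalar_mat2_def one_mat2_def zero_mat2_def

lemma O2_test_reps:
  "mat2.O_rep (mat2.rank_two_rep (vec2 1 0) (vec2 1 0) (vec2 0 1) (vec2 0 1) pauli_x pauli_x)"
  "mat2.O_rep (mat2.rank_two_rep (vec2 1 0) (vec2 1 0) (vec2 0 1) (vec2 0 1) pauli_x pauli_z)"
  "mat2.O_rep (mat2.rank_two_rep (vec2 1 0) (vec2 0 1) (vec2 0 1) (vec2 1 0) pauli_x pauli_x)"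
  "mat2.O_rep (mat2.rank_two_rep (vec2 1 0) (vec2 0 1) (vec2 0 1) (vec2 1 0) pauli_x pauli_z)"
  "mat2.O_rep (mat2.rank_two_rep (vec2 1 0) (vec2 (3/5) (4/5)) (vec2 0 1) (vec2 (-4/5) (3/5)) pauli_x pauli_x)"
  "mat2.O_rep (mat2.rank_two_rep (vec2 1 0) (vec2 (3/5) (4/5)) (vec2 0 1) (vec2 (-4/5) (3/5)) pauli_x pauli_z)"
  "mat2.O_rep (mat2.rank_two_rep (vec2 (3/5) (4/5)) (vec2 1 0) (vec2 (-4/5) (3/5)) (vec2 0 1) pauli_x pauli_z)"
  by (simp_all add: mat2.O_rep_iff forall_2 sum_2 mat2.rank_two_rep_def vec2_def)
    (simp_all add: mat2_test_eval_simps)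

lemma B3_test_reps:
  "mat2.B_rep (mat2.bistochastic_rank_two_rep (vec3 0 1 (-1)) (vec3 0 (1/2) (-1/2))
     (vec3 (-2) 1 1) (vec3 (-1/3) (1/6) (1/6)) pauli_x upper_involution)"
  "mat2.B_rep (mat2.bistochastic_rank_two_rep (vec3 0 1 (-1)) (vec3 0 (-1/2) (1/2))
     (vec3 (-2) 1 1) (vec3 (-1/3) (1/6) (1/6)) upper_involution upper_involution)"
  "mat2.B_rep (mat2.bistochastic_rank_two_rep (vec3 1 (-1) 0) (vec3 (-1/2) 0 (1/2))
     (vec3 (-1) (-1) 2) (vec3 (-1/6) (1/3) (-1/6)) pauli_z lower_involution)"
  "mat2.B_rep (mat2.bistochastic_rank_two_rep (vec3 (-1) 1 0) (vec3 0 (-1/2) (1/2))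
     (vec3 (-1) (-1) 2) (vec3 (-1/3) (1/6) (1/6)) pauli_x upper_involution)"
  "mat2.B_rep (mat2.bistochastic_rank_two_rep (vec3 0 (-1) 1) (vec3 (1/2) (-1/2) 0)
     (vec3 2 (-1) (-1)) (vec3 (-1/6) (-1/6) (1/3)) pauli_z pauli_z)"
  "mat2.B_rep (mat2.bistochastic_rank_two_rep (vec3 1 0 (-1)) (vec3 0 (1/2) (-1/2))
     (vec3 (-1) 2 (-1)) (vec3 (-1/3) (1/6) (1/6)) upper_involution lower_involution)"
  by (simp_all add: mat2.B_rep_iff mat2.O_rep_iff forall_3 sum_3 mat2.bistochastic_rank_two_rep_def
      mat2.rank_two_rep_def vec3_def)
    (simp_all add: mat2_test_eval_simps)

section \<open>Linear independence\<close>

lemma (in vector_space) dim_span_eq_length: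
  assumes "\<And>c. (\<Sum>i<length xs. scale (c i) (xs ! i)) = 0 \<Longrightarrow> \<forall>i<length xs. c i = 0"
  shows "dim (span (set xs)) = length xs"
proof -
  let ?n = "length xs"
  have "distinct xs"
    unfolding distinct_conv_nth
  proof (intro allI impI notI)
    fix i j assume ij: "i < ?n" "j < ?n" "i \<noteq> j" "xs ! i = xs ! j"
    define c :: "nat \<Rightarrow> 'a" where "c k = (if k = i then 1 else if k = j then -1 else 0)" for k
    have "(\<Sum>k<?n. scale (c k) (xs ! k)) = (\<Sum>k\<in>{i, j}. scale (c k) (xs ! k))"
      by (rule sum.mono_neutral_right) (use ij in \<open>auto simp: c_def\<close>)
    also have "\<dots> = 0"
      using ij by (simp add: c_def)
    finally show False
      using assms ij(1) by (fastforce simp: c_def)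
  qed
  have set_xs: "set xs = (!) xs ` {..<?n}"
    by (auto simp: set_conv_nth)
  have inj: "inj_on ((!) xs) {..<?n}"
    using \<open>distinct xs\<close> by (simp add: inj_on_nth)
  have "independent (set xs)"
  proof
    assume "dependent (set xs)"
    then obtain c v where v: "v \<in> set xs" "c v \<noteq> 0" and "(\<Sum>v\<in>set xs. scale (c v) v) = 0"
      by (auto simp: dependent_finite)
    then have "(\<Sum>i<?n. scale (c (xs ! i)) (xs ! i)) = 0"
      by (simp add: set_xs sum.reindex[OF inj])
    with assms have "\<forall>i<?n. c (xs ! i) = 0" .
    with v show False
      by (auto simp: set_conv_nth)
  qed
  then show ?thesis
    using \<open>distinct xs\<close> by (simp add: dim_eq_card_independent distinct_card)
qed

definition O2_basis :: "(2 \<times> 2) list list" where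
  "O2_basis = [[(1,1), (1,1)], [(1,2), (1,2)], [(1,1), (1,2)], [(1,1), (2,1)], [(1,1), (2,2)],
               [(1,2), (1,1)], [(1,2), (2,1)], [(2,1), (1,1)], [(2,1), (1,2)], [(2,2), (1,1)]]"

definition B3_basis :: "(3 \<times> 3) list list" where
  "B3_basis = [[], [(1,1)], [(1,2)], [(2,1)], [(2,2)], [(1,1), (2,2)], [(1,2), (2,1)], [(1,2), (2,2)],
               [(2,1), (1,2)], [(2,1), (2,2)], [(2,2), (1,1)], [(2,2), (1,2)], [(2,2), (2,1)],
               [(2,2), (2,2)]]"

lemma length_O2_basis: "length O2_basis = 10"
  by (simp add: O2_basis_def)

lemma length_B3_basis: "length B3_basis = 14"
  by (simp add: B3_basis_def)

lemma O2_basis_independent: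
  assumes "(\<Sum>i<length O2_basis. scale_O (c i) (abs_pol_O (monomial (O2_basis ! i)))) = 0"
  shows "\<forall>i<length O2_basis. c i = 0"
proof -
  have rel: "(\<Sum>i<10. scalar_mat2 (c i) * prod_list (map g (O2_basis ! i))) = 0"
    if "mat2.O_rep g" for g
    using mat2.O_rep_linear_relation[OF that assms] by (simp add: length_O2_basis)
  note O2_basis_def [simp] lessThan_nat_numeral [simp] mat2_test_eval_simps [simp]
  note evaluations = O2_test_reps[THEN rel, simplified, unfolded One_nat_def[symmetric]]
  have "c 0 = 0 \<and> c 1 = 0 \<and> c 2 = 0 \<and> c 3 = 0 \<and> c 4 = 0 \<and> c 5 = 0 \<and> c 6 = 0 \<and> c 7 = 0 \<and> c 8 = 0 \<and> c 9 = 0"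
    using evaluations by (elim conjE) (intro conjI; algebra)
  then show ?thesis
    unfolding length_O2_basis by (auto simp: less_Suc_eq numeral_eq_Suc)
qed

lemma B3_basis_independent:
  assumes "(\<Sum>i<length B3_basis. scale_B (c i) (abs_pol_B (monomial (B3_basis ! i)))) = 0"
  shows "\<forall>i<length B3_basis. c i = 0"
proof -
  have rel: "(\<Sum>i<14. scalar_mat2 (c i) * prod_list (map g (B3_basis ! i))) = 0"
    if "mat2.B_rep g" for g
    using mat2.B_rep_linear_relation[OF that assms] by (simp add: length_B3_basis)
  note B3_basis_def [simp] lessThan_nat_numeral [simp] mat2_test_eval_simps [simp]
  note evaluations = B3_test_reps[THEN rel, simplified, unfolded One_nat_def[symmetric]]
  have "c 0 = 0 \<and> c 1 = 0 \<and> c 2 = 0 \<and> c 3 = 0 \<and> c 4 = 0 \<and> c 5 = 0 \<and> c 6 = 0 \<and> c 7 = 0 \<and>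
      c 8 = 0 \<and> c 9 = 0 \<and> c 10 = 0 \<and> c 11 = 0 \<and> c 12 = 0 \<and> c 13 = 0"
    using evaluations by (elim conjE) (intro conjI; algebra)
  then show ?thesis
    unfolding length_B3_basis by (auto simp: less_Suc_eq numeral_eq_Suc)
qed

section \<open>Spanning families\<close>

lemma scale_B_mult_left: "scale_B c x * y = scale_B c (x * y)"
  by transfer (simp add: fscale_def mult.assoc B_equiv_eqI)

lemma scale_B_mult_right: "x * scale_B c y = scale_B c (x * y)"
  by transfer (metis B_equiv_eqI fscale_def mult.assoc single_0_mult_commute)

lemma B_space_span_mult:
  assumes "p \<in> B_space.span A" and "q \<in> B_space.span A'"
    and "\<And>a b. a \<in> A \<Longrightarrow> b \<in> A' \<Longrightarrow> a * b \<in> B_space.span T"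
  shows "p * q \<in> B_space.span T"
proof -
  have left: "p' * b \<in> B_space.span T" if "p' \<in> B_space.span A" and "b \<in> A'" for p' b
    using that(1)
  proof (induction rule: B_space.span_induct)
    case base
    show ?case
      by (simp add: B_space.subspace_def B_space.span_zero B_space.span_add B_space.span_scale
          distrib_right scale_B_mult_left)
  qed (use assms(3) that(2) in simp)
  show ?thesis
    using assms(2)
  proof (induction rule: B_space.span_induct)
    case base
    show ?case
      by (simp add: B_space.subspace_def B_space.span_zero B_space.span_add B_space.span_scale
          distrib_left scale_B_mult_right)
  qed (use left assms(1) in simp)
qed

lemma B_space_span_of_double:
  assumes "q + q \<in> B_space.span S"
  shows "q \<in> B_space.span S"
proof -
  have "scale_B (1/2) (q + q) = q"
    by (simp add: B_space.scale_right_distrib flip: B_space.scale_left_distrib)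
  with B_space.span_scale[OF assms, of "1/2"] show ?thesis
    by simp
qed

lemma O2_quadratic_relations:
  fixes a b c d :: "2 pol_O"
  defines "a \<equiv> o_gen 1 1" and "b \<equiv> o_gen 1 2" and "c \<equiv> o_gen 2 1" and "d \<equiv> o_gen 2 2"
  shows "d * d = a * a" and "c * c = b * b"
    and "b * d = - (a * c)" and "d * b = - (c * a)" and "c * d = - (a * b)" and "d * c = - (b * a)"
proof -
  have rows: "a * a + b * b = 1" "a * c + b * d = 0" "c * a + d * b = 0"
    using o_gen_orthogonal(1)[of "1::2" 1] o_gen_orthogonal(1)[of "1::2" 2]
      o_gen_orthogonal(1)[of "2::2" 1]
    by (simp_all add: sum_2 a_def b_def c_def d_def)
  have cols: "a * a + c * c = 1" "b * b + d * d = 1" "a * b + c * d = 0" "b * a + d * c = 0"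
    using o_gen_orthogonal(2)[of "1::2" 1] o_gen_orthogonal(2)[of "2::2" 2]
      o_gen_orthogonal(2)[of "1::2" 2] o_gen_orthogonal(2)[of "2::2" 1]
    by (simp_all add: sum_2 a_def b_def c_def d_def)
  show "d * d = a * a" "c * c = b * b"
    using rows(1) cols(1,2) by (metis add.commute add_left_cancel)+
  show "b * d = - (a * c)" "d * b = - (c * a)" "c * d = - (a * b)" "d * c = - (b * a)"
    using rows(2,3) cols(3,4) by (simp_all add: eq_neg_iff_add_eq_0 add.commute)
qed

lemma span_O2_products:
  "O_space.span {o_gen m n * o_gen s t | m n s t. True} =
   O_space.span (set (map (\<lambda>ws. abs_pol_O (monomial ws)) O2_basis))"
proof (rule O_space.span_eq[THEN iffD2], intro conjI subsetI)
  fix p :: "2 pol_O"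
  assume "p \<in> {o_gen m n * o_gen s t | m n s t. True}"
  then obtain m n s t :: 2 where p: "p = o_gen m n * o_gen s t"
    by blast
  have "m = 1 \<or> m = 2" "n = 1 \<or> n = 2" "s = 1 \<or> s = 2" "t = 1 \<or> t = 2"
    by (rule exhaust_2)+
  then show "p \<in> O_space.span (set (map (\<lambda>ws. abs_pol_O (monomial ws)) O2_basis))"
    unfolding p
    by (elim disjE) (simp_all add: O2_basis_def abs_pol_O_monomial O2_quadratic_relations
        O_space.span_base O_space.span_neg)
next
  fix p :: "2 pol_O"
  assume "p \<in> set (map (\<lambda>ws. abs_pol_O (monomial ws)) O2_basis)"
  then show "p \<in> O_space.span {o_gen m n * o_gen s t | m n s t. True}"
    by (auto simp: O2_basis_def abs_pol_O_monomial intro!: O_space.span_base)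
qed

lemma B3_affine_entries:
  shows "b_gen 1 3 = 1 - b_gen 1 1 - b_gen (1::3) 2"
    and "b_gen 2 3 = 1 - b_gen 2 1 - b_gen (2::3) 2"
    and "b_gen 3 1 = 1 - b_gen 1 1 - b_gen (2::3) 1"
    and "b_gen 3 2 = 1 - b_gen 1 2 - b_gen (2::3) 2"
    and "b_gen 3 3 = b_gen 1 1 + b_gen 1 2 + b_gen 2 1 + b_gen (2::3) 2 - 1"
proof -
  have rows: "b_gen i 1 + b_gen i 2 + b_gen i 3 = 1"
    and cols: "b_gen 1 i + b_gen 2 i + b_gen 3 i = 1" for i :: 3
    using b_gen_stochastic[of i] by (simp_all add: sum_3)
  show b13: "b_gen 1 3 = 1 - b_gen 1 1 - b_gen (1::3) 2"
    and b23: "b_gen 2 3 = 1 - b_gen 2 1 - b_gen (2::3) 2"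
    and "b_gen 3 1 = 1 - b_gen 1 1 - b_gen (2::3) 1"
    and "b_gen 3 2 = 1 - b_gen 1 2 - b_gen (2::3) 2"
    using rows[of 1] rows[of 2] cols[of 1] cols[of 2] by (simp_all add: algebra_simps eq_diff_eq)
  have "b_gen 3 3 = 1 - b_gen 1 3 - b_gen (2::3) 3"
    using cols[of 3] by (simp add: algebra_simps eq_diff_eq)
  then show "b_gen 3 3 = b_gen 1 1 + b_gen 1 2 + b_gen 2 1 + b_gen (2::3) 2 - 1"
    by (simp add: b13 b23 algebra_simps)
qed

lemma B3_quadratic_relations:
  fixes x y z w :: "3 pol_B"
  defines "x \<equiv> b_gen 1 1" and "y \<equiv> b_gen 1 2" and "z \<equiv> b_gen 2 1" and "w \<equiv> b_gen 2 2"
  shows "y * y + y * y = y + y + w + w - w * w - w * w - y * w - w * y"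
    and "z * z + z * z = z + z + w + w - w * w - w * w - z * w - w * z"
    and "x * y + x * y = x + y + z + w - 1 - z * w - z * w - x * w - z * y"
    and "x * z + x * z = x + y + z + w - 1 - y * w - y * w - x * w - y * z"
    and "y * x + y * x = x + y + z + w - 1 - w * z - w * z - y * z - w * x"
    and "z * x + z * x = x + y + z + w - 1 - w * y - w * y - z * y - w * x"
    and "x * x + x * x = x + x + y + y - y * y - y * y - x * y - y * x"
proof -
  have row: "(\<Sum>k\<in>UNIV. b_gen i k * b_gen j k) = (if i = j then 1 else 0)"
    and col: "(\<Sum>k\<in>UNIV. b_gen k i * b_gen k j) = (if i = j then 1 else 0)" for i j :: 3
    by (rule b_gen_orthogonal)+
  have eq_if_diff: "a = b" if "a - b = c - d" and "c = d" for a b c d :: "3 pol_B"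
    using that by simp
  note expand = sum_3 B3_affine_entries x_def[symmetric] y_def[symmetric] z_def[symmetric] w_def[symmetric]
  show "y * y + y * y = y + y + w + w - w * w - w * w - y * w - w * y"
    by (rule eq_if_diff[OF _ col[of 2 2, unfolded expand]]) (simp add: algebra_simps)
  show "z * z + z * z = z + z + w + w - w * w - w * w - z * w - w * z"
    by (rule eq_if_diff[OF _ row[of 2 2, unfolded expand]]) (simp add: algebra_simps)
  show "x * y + x * y = x + y + z + w - 1 - z * w - z * w - x * w - z * y"
    by (rule eq_if_diff[OF _ col[of 1 2, unfolded expand]]) (simp add: algebra_simps)
  show "x * z + x * z = x + y + z + w - 1 - y * w - y * w - x * w - y * z"
    by (rule eq_if_diff[OF _ row[of 1 2, unfolded expand]]) (simp add: algebra_simps)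
  show "y * x + y * x = x + y + z + w - 1 - w * z - w * z - y * z - w * x"
    by (rule eq_if_diff[OF _ col[of 2 1, unfolded expand]]) (simp add: algebra_simps)
  show "z * x + z * x = x + y + z + w - 1 - w * y - w * y - z * y - w * x"
    by (rule eq_if_diff[OF _ row[of 2 1, unfolded expand]]) (simp add: algebra_simps)
  show "x * x + x * x = x + x + y + y - y * y - y * y - x * y - y * x"
    by (rule eq_if_diff[OF _ row[of 1 1, unfolded expand]]) (simp add: algebra_simps)
qed

lemma B3_small_products_in_span:
  fixes x y z w :: "3 pol_B"
  defines "x \<equiv> b_gen 1 1" and "y \<equiv> b_gen 1 2" and "z \<equiv> b_gen 2 1" and "w \<equiv> b_gen 2 2"
  assumes a_in: "a \<in> {1, x, y, z, w}" and b_in: "b \<in> {1, x, y, z, w}"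
  shows "a * b \<in> B_space.span (set (map (\<lambda>ws. abs_pol_B (monomial ws)) B3_basis))"
proof -
  have basis: "set (map (\<lambda>ws. abs_pol_B (monomial ws)) B3_basis) =
      {1, x, y, z, w, x * w, y * z, y * w, z * y, z * w, w * x, w * y, w * z, w * w}"
    by (simp add: B3_basis_def abs_pol_B_monomial x_def y_def z_def w_def)
  let ?V = "B_space.span {1, x, y, z, w, x * w, y * z, y * w, z * y, z * w, w * x, w * y, w * z, w * w}"
  have "1 \<in> ?V" "x \<in> ?V" "y \<in> ?V" "z \<in> ?V" "w \<in> ?V" "x * w \<in> ?V" "y * z \<in> ?V"
    "y * w \<in> ?V" "z * y \<in> ?V" "z * w \<in> ?V" "w * x \<in> ?V" "w * y \<in> ?V" "w * z \<in> ?V" "w * w \<in> ?V"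
    by (simp_all add: B_space.span_base)
  note in_V = this B_space.span_add B_space.span_diff
  note relations = B3_quadratic_relations[folded x_def y_def z_def w_def]
  have "y * y \<in> ?V" "z * z \<in> ?V" "x * y \<in> ?V" "x * z \<in> ?V" "y * x \<in> ?V" "z * x \<in> ?V"
    by (rule B_space_span_of_double; simp add: relations in_V)+
  note in_V = in_V this
  have "x * x \<in> ?V"
    by (rule B_space_span_of_double) (simp add: relations in_V)
  with in_V a_in b_in show ?thesis
    unfolding basis by auto
qed

lemma B3_entries_in_span:
  "b_gen i j \<in> B_space.span {1, b_gen 1 1, b_gen 1 2, b_gen 2 1, b_gen (2::3) 2}"
proof -
  have "i = 1 \<or> i = 2 \<or> i = 3" "j = 1 \<or> j = 2 \<or> j = 3"
    by (rule exhaust_3)+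
  then show ?thesis
    by (elim disjE) (simp_all add: B3_affine_entries B_space.span_base B_space.span_diff B_space.span_add)
qed

lemma B3_products_in_span:
  "b_gen m n * b_gen s t \<in> B_space.span (set (map (\<lambda>ws. abs_pol_B (monomial ws)) B3_basis))"
  by (rule B_space_span_mult[OF B3_entries_in_span B3_entries_in_span B3_small_products_in_span])

lemma B3_basis_in_span_products:
  "set (map (\<lambda>ws. abs_pol_B (monomial ws)) B3_basis) \<subseteq>
   B_space.span {b_gen m n * b_gen s t :: 3 pol_B | m n s t. True}"
proof -
  let ?S = "B_space.span {b_gen m n * b_gen s t :: 3 pol_B | m n s t. True}"
  have products: "b_gen m n * b_gen s t \<in> ?S" for m n s t :: 3
    by (rule B_space.span_base) blast
  have entries: "b_gen i j \<in> ?S" for i j :: 3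
  proof -
    have "b_gen i j = b_gen i j * b_gen 1 1 + b_gen i j * b_gen 1 2 + b_gen i j * b_gen 1 3"
      using b_gen_stochastic(1)[of "1::3"] by (simp add: sum_3 flip: distrib_left)
    also have "\<dots> \<in> ?S"
      by (intro B_space.span_add products)
    finally show ?thesis .
  qed
  have "1 = b_gen 1 1 * b_gen 1 1 + b_gen 1 2 * b_gen 1 2 + b_gen 1 3 * b_gen (1::3) 3"
    using b_gen_orthogonal(1)[of "1::3" 1] by (simp add: sum_3)
  also have "\<dots> \<in> ?S"
    by (intro B_space.span_add products)
  finally have "1 \<in> ?S" .
  with entries products show ?thesis
    by (auto simp: B3_basis_def abs_pol_B_monomial)
qed

lemma span_B3_products:
  "B_space.span {b_gen m n * b_gen s t | m n s t. True} =
   B_space.span (set (map (\<lambda>ws. abs_pol_B (monomial ws)) B3_basis))"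
proof (rule B_space.span_eq[THEN iffD2], intro conjI)
  show "{b_gen m n * b_gen s t | m n s t. True} \<subseteq>
      B_space.span (set (map (\<lambda>ws. abs_pol_B (monomial ws)) B3_basis))"
    using B3_products_in_span by blast
qed (rule B3_basis_in_span_products)

lemma dim_span_O2_products:
  "O_space.dim (O_space.span {o_gen m n * o_gen s t :: 2 pol_O | m n s t. True}) = 10"
  unfolding span_O2_products
  by (subst O_space.dim_span_eq_length) (use O2_basis_independent in \<open>simp_all add: length_O2_basis\<close>)

lemma dim_span_B3_products:
  "B_space.dim (B_space.span {b_gen m n * b_gen s t :: 3 pol_B | m n s t. True}) = 14"
  unfolding span_B3_products
  by (subst B_space.dim_span_eq_length) (use B3_basis_independent in \<open>simp_all add: length_B3_basis\<close>)

theorem lemma7p3: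
  shows "vector_space.dim (scale_B :: complex \<Rightarrow> 3 pol_B \<Rightarrow> 3 pol_B)
           (module.span scale_B {b_gen m n * b_gen s t | m n s t. True}) = 14
       \<and> vector_space.dim (scale_O :: complex \<Rightarrow> 2 pol_O \<Rightarrow> 2 pol_O)
           (module.span scale_O {o_gen m n * o_gen s t | m n s t. True}) = 10"
  using dim_span_B3_products dim_span_O2_products by simp

end
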